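(* Let $\alpha > 5/6$ and $c > 0$ be fixed constants, and let $p = n^{-\alpha}$. Let $G \sim G(n,p)$. Then the probability that every set of at most $c\sqrt{n}$ vertices of $G$ induces a $3$-colorable subgraph of $G$ tends to $1$ as $n \to \infty$.
   Context: $G(n,p)$ denotes the random graph on $n$ labelled vertices in which each of the $\binom{n}{2}$ pairs of vertices is an edge independently with probability $p$. A graph is $3$-colorable if its vertices can be colored with $3$ colors so that no two adjacent vertices receive the same color. *)

theory Defs
  imports Complex_Main
begin

text \<open>Simple graphs on the labelled vertex set {0..<n} are represented by their edge sets,
  which are subsets of the set of all 2-element subsets of {0..<n}.\<close>

definition all_edges :: "nat \<Rightarrow> nat set set" where
  "all_edges n = {e. \<exists>i j. i < j \<and> j < n \<and> e = {i, j}}"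

text \<open>Probability that the random graph G(n,p) has property P: each of the
  (n choose 2) pairs is an edge independently with probability p, so the graph with
  edge set E has probability p^|E| (1-p)^(N-|E|).\<close>

definition gnp_prob :: "nat \<Rightarrow> real \<Rightarrow> (nat set set \<Rightarrow> bool) \<Rightarrow> real" where
  "gnp_prob n p P =
     (\<Sum>E\<in>Pow (all_edges n). if P E
        then p ^ card E * (1 - p) ^ (card (all_edges n) - card E) else 0)"

definition induced_3_colorable :: "nat set set \<Rightarrow> nat set \<Rightarrow> bool" where
  "induced_3_colorable E S \<longleftrightarrow>
     (\<exists>col :: nat \<Rightarrow> nat. (\<forall>v\<in>S. col v < 3) \<and>
        (\<forall>u\<in>S. \<forall>v\<in>S. {u, v} \<in> E \<longrightarrow> col u \<noteq> col v))"

end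

theory Submission
  imports Defs
begin

text \<open>A set of at most \<open>c\<surd>n\<close> vertices that induces a non-3-colourable subgraph contains a
  minimal one, a set \<open>T\<close> of \<open>t\<close> vertices in which every vertex has at least three neighbours;
  so \<open>G[T]\<close> has at least \<open>3t/2\<close> edges. The expected number of such configurations is at most
  \<open>C(n,t) C(t\<^sup>2, \<lceil>3t/2\<rceil>) p\<^bsup>\<lceil>3t/2\<rceil>\<^esup> \<le> (e\<^sup>5 n\<^sup>2 t p\<^sup>3)\<^bsup>t/2\<^esup>\<close>, and for \<open>t \<le> c\<surd>n\<close> and
  \<open>p = n\<^bsup>-\<alpha>\<^esup>\<close> the base is \<open>O(n\<^bsup>5/2 - 3\<alpha>\<^esup>) \<rightarrow> 0\<close> exactly because \<open>\<alpha> > 5/6\<close>.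
  Summing the geometric series over \<open>t\<close> gives the first-moment bound.\<close>

lemma finite_all_edges: "finite (all_edges n)"
proof -
  have "all_edges n \<subseteq> Pow {..<n}" unfolding all_edges_def by auto
  then show ?thesis by (rule finite_subset) auto
qed

lemma no_loop_if_subset_all_edges: "E \<subseteq> all_edges n \<Longrightarrow> {v} \<notin> E"
  unfolding all_edges_def by (auto simp: doubleton_eq_iff)

lemma gnp_prob_superset:
  fixes p :: real
  assumes F: "F \<subseteq> all_edges n"
  shows "gnp_prob n p (\<lambda>E. F \<subseteq> E) = p ^ card F"
proof -
  let ?A = "all_edges n"
  let ?q = "\<lambda>x. if x \<in> F then 0 else 1 - p"
  have fin: "finite ?A" by (rule finite_all_edges)
  have "gnp_prob n p (\<lambda>E. F \<subseteq> E) = (\<Sum>X\<in>Pow ?A. (\<Prod>x\<in>X. p) * (\<Prod>x\<in>?A-X. ?q x))"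
    unfolding gnp_prob_def
  proof (rule sum.cong[OF refl])
    fix X assume X: "X \<in> Pow ?A"
    show "(if F \<subseteq> X then p ^ card X * (1 - p) ^ (card ?A - card X) else 0) =
        (\<Prod>x\<in>X. p) * (\<Prod>x\<in>?A-X. ?q x)"
    proof (cases "F \<subseteq> X")
      case True
      then have "(\<Prod>x\<in>?A-X. ?q x) = (\<Prod>x\<in>?A-X. 1 - p)" by (intro prod.cong) auto
      then show ?thesis using True X fin by (simp add: card_Diff_subset finite_subset)
    next
      case False
      then obtain y where "y \<in> F" "y \<notin> X" by auto
      then have "(\<Prod>x\<in>?A-X. ?q x) = 0" using F fin by (intro prod_zero) auto
      then show ?thesis using False by simp
    qed
  qed
  also have "\<dots> = (\<Prod>x\<in>?A. p + ?q x)" by (rule prod_add[OF fin, symmetric])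
  also have "\<dots> = (\<Prod>x\<in>?A. if x \<in> F then p else 1)" by (intro prod.cong) auto
  also have "\<dots> = p ^ card F" using F fin by (simp add: prod.If_cases Int_absorb1 finite_subset)
  finally show ?thesis .
qed

lemma gnp_prob_Not: "gnp_prob n p (\<lambda>E. \<not> P E) = 1 - gnp_prob n p P"
proof -
  have "gnp_prob n p P + gnp_prob n p (\<lambda>E. \<not> P E) = gnp_prob n p (\<lambda>E. {} \<subseteq> E)"
    unfolding gnp_prob_def by (subst sum.distrib[symmetric]) (intro sum.cong, auto)
  also have "\<dots> = 1" using gnp_prob_superset[of "{}" n p] by simp
  finally show ?thesis by simp
qed

lemma gnp_prob_nonneg: "0 \<le> p \<Longrightarrow> p \<le> 1 \<Longrightarrow> 0 \<le> gnp_prob n p P"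
  unfolding gnp_prob_def by (intro sum_nonneg) auto

lemma gnp_prob_union_bound:
  fixes p :: real
  assumes p: "0 \<le> p" "p \<le> 1" and I: "finite I"
    and cover: "\<And>E. E \<subseteq> all_edges n \<Longrightarrow> P E \<Longrightarrow> \<exists>i\<in>I. Q i E"
  shows "gnp_prob n p P \<le> (\<Sum>i\<in>I. gnp_prob n p (Q i))"
proof -
  let ?A = "all_edges n"
  let ?w = "\<lambda>E::nat set set. p ^ card E * (1 - p) ^ (card ?A - card E)"
  have "(if P E then ?w E else 0) \<le> (\<Sum>i\<in>I. if Q i E then ?w E else 0)" if E: "E \<in> Pow ?A" for E
  proof (cases "P E")
    case True
    then obtain i where i: "i \<in> I" "Q i E" using cover E by auto
    have "(if Q i E then ?w E else 0) \<le> (\<Sum>i\<in>I. if Q i E then ?w E else 0)"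
      using i I p by (intro member_le_sum) auto
    then show ?thesis using True i by simp
  qed (use p in \<open>auto intro!: sum_nonneg\<close>)
  then have "gnp_prob n p P \<le> (\<Sum>E\<in>Pow ?A. \<Sum>i\<in>I. if Q i E then ?w E else 0)"
    unfolding gnp_prob_def by (rule sum_mono)
  also have "\<dots> = (\<Sum>i\<in>I. gnp_prob n p (Q i))"
    unfolding gnp_prob_def by (rule sum.swap)
  finally show ?thesis .
qed

subsection \<open>Minimal non-3-colourable vertex sets are dense\<close>

definition vertex_pairs :: "nat set \<Rightarrow> nat set set" where
  "vertex_pairs T = {e. \<exists>u\<in>T. \<exists>v\<in>T. u \<noteq> v \<and> e = {u, v}}"

definition neighbours_in :: "nat set set \<Rightarrow> nat set \<Rightarrow> nat \<Rightarrow> nat set" where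
  "neighbours_in E T v = {u\<in>T. {u, v} \<in> E \<and> u \<noteq> v}"

lemma vertex_pairs_subset_image: "vertex_pairs T \<subseteq> (\<lambda>(u, v). {u, v}) ` (T \<times> T)"
  unfolding vertex_pairs_def by auto

lemma finite_vertex_pairs: "finite T \<Longrightarrow> finite (vertex_pairs T)"
  using vertex_pairs_subset_image by (rule finite_subset) auto

lemma card_vertex_pairs_le:
  assumes "finite T" shows "card (vertex_pairs T) \<le> card T ^ 2"
proof -
  have "card (vertex_pairs T) \<le> card ((\<lambda>(u, v). {u, v}) ` (T \<times> T))"
    using assms by (intro card_mono[OF _ vertex_pairs_subset_image]) auto
  also have "\<dots> \<le> card (T \<times> T)" by (rule card_image_le) (use assms in auto)
  finally show ?thesis by (simp add: card_cartesian_product power2_eq_square)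
qed

lemma vertex_pairs_subset_all_edges: "T \<subseteq> {..<n} \<Longrightarrow> vertex_pairs T \<subseteq> all_edges n"
  unfolding vertex_pairs_def all_edges_def
  by (auto simp: insert_commute dest!: nat_neq_iff[THEN iffD1])

lemma exists_minimal_not_induced_3_colorable:
  assumes "finite S" "\<not> induced_3_colorable E S"
  obtains T where "T \<subseteq> S" "\<not> induced_3_colorable E T"
    "\<And>T'. T' \<subset> T \<Longrightarrow> induced_3_colorable E T'"
  using assms
proof (induction S rule: finite_psubset_induct)
  case (psubset S)
  show ?case
  proof (cases "\<forall>T'. T' \<subset> S \<longrightarrow> induced_3_colorable E T'")
    case True
    then show ?thesis using psubset.prems by blast
  next
    case False
    then obtain T' where "T' \<subset> S" "\<not> induced_3_colorable E T'" by auto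
    with psubset show ?thesis by (metis order.trans psubset_imp_subset)
  qed
qed

text \<open>If a vertex had at most two neighbours, a 3-colouring of the rest would extend to it.\<close>

lemma minimal_not_induced_3_colorable_degree:
  assumes fin: "finite T" and no_loop: "\<And>v. {v} \<notin> E"
    and min: "\<And>T'. T' \<subset> T \<Longrightarrow> induced_3_colorable E T'" and v: "v \<in> T"
    and not_col: "\<not> induced_3_colorable E T"
  shows "3 \<le> card (neighbours_in E T v)"
proof (rule ccontr)
  let ?N = "neighbours_in E T v"
  assume few: "\<not> 3 \<le> card ?N"
  have free_colour: "\<exists>c\<in>{0, 1, 2}. c \<notin> col ` ?N" for col :: "nat \<Rightarrow> nat"
  proof -
    have finN: "finite ?N" using fin by (simp add: neighbours_in_def)
    have "card (col ` ?N) < card {0, 1, 2::nat}"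
      using card_image_le[OF finN, of col] few by simp
    then have "\<not> {0, 1, 2} \<subseteq> col ` ?N" by (meson card_mono finite_imageI[OF finN] leD)
    then show ?thesis by blast
  qed
  obtain col :: "nat \<Rightarrow> nat" where col: "\<forall>w\<in>T - {v}. col w < 3"
    "\<forall>u\<in>T - {v}. \<forall>w\<in>T - {v}. {u, w} \<in> E \<longrightarrow> col u \<noteq> col w"
    using min[of "T - {v}"] v unfolding induced_3_colorable_def by blast
  obtain c where c: "c \<in> {0, 1, 2}" "c \<notin> col ` ?N" using free_colour by blast
  have "induced_3_colorable E T"
    unfolding induced_3_colorable_def
  proof (intro exI[of _ "col(v := c)"] conjI ballI impI)
    fix w assume "w \<in> T" then show "(col(v := c)) w < 3" using col c by auto
  next
    fix u w assume uw: "u \<in> T" "w \<in> T" "{u, w} \<in> E"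
    then have "u \<noteq> w" using no_loop by auto
    moreover have "u \<in> ?N" if "w = v" using uw that \<open>u \<noteq> w\<close> by (simp add: neighbours_in_def)
    moreover have "w \<in> ?N" if "u = v" using uw that \<open>u \<noteq> w\<close>
      by (simp add: neighbours_in_def insert_commute)
    ultimately show "(col(v := c)) u \<noteq> (col(v := c)) w"
      using uw col c by (cases "u = v"; cases "w = v") auto
  qed
  then show False using not_col by simp
qed

lemma three_card_le_twice_card_edges:
  assumes fin: "finite T" and deg: "\<And>v. v \<in> T \<Longrightarrow> 3 \<le> card (neighbours_in E T v)"
  shows "3 * card T \<le> 2 * card (E \<inter> vertex_pairs T)"
proof -
  let ?F = "E \<inter> vertex_pairs T"
  let ?fibre = "\<lambda>e. {x\<in>T \<times> T. {snd x, fst x} = e}"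
  have finF: "finite ?F" using finite_vertex_pairs[OF fin] by auto
  have fibre_le: "card (?fibre e) \<le> 2" if e: "e \<in> ?F" for e
  proof -
    obtain a b where "e = {a, b}" using e by (auto simp: vertex_pairs_def)
    then have "?fibre e \<subseteq> {(a, b), (b, a)}" by (auto simp: doubleton_eq_iff)
    then have "card (?fibre e) \<le> card {(a, b), (b, a)}" by (intro card_mono) auto
    also have "\<dots> \<le> 2" by (simp add: card_insert_le_m1)
    finally show ?thesis .
  qed
  have "3 * card T = (\<Sum>v\<in>T. 3)" by simp
  also have "\<dots> \<le> (\<Sum>v\<in>T. card (neighbours_in E T v))" using deg by (rule sum_mono)
  also have "\<dots> = card (SIGMA v:T. neighbours_in E T v)"
    using fin by (simp add: neighbours_in_def)
  also have "\<dots> \<le> card (\<Union>e\<in>?F. ?fibre e)"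
    using fin finF by (intro card_mono) (auto simp: neighbours_in_def vertex_pairs_def, blast)
  also have "\<dots> \<le> (\<Sum>e\<in>?F. card (?fibre e))" by (rule card_UN_le[OF finF])
  also have "\<dots> \<le> (\<Sum>e\<in>?F. 2)" using fibre_le by (rule sum_mono)
  also have "\<dots> = 2 * card ?F" by simp
  finally show ?thesis .
qed

lemma not_induced_3_colorable_imp_dense_subset:
  assumes "finite S" "E \<subseteq> all_edges n" "\<not> induced_3_colorable E S"
  obtains T where "T \<subseteq> S" "T \<noteq> {}" "3 * card T \<le> 2 * card (E \<inter> vertex_pairs T)"
proof -
  obtain T where T: "T \<subseteq> S" "\<not> induced_3_colorable E T"
    and min: "\<And>T'. T' \<subset> T \<Longrightarrow> induced_3_colorable E T'"
    using exists_minimal_not_induced_3_colorable assms(1,3) by blast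
  have fin: "finite T" using T(1) assms(1) finite_subset by blast
  have "T \<noteq> {}" using T(2) unfolding induced_3_colorable_def by auto
  moreover have "3 * card T \<le> 2 * card (E \<inter> vertex_pairs T)"
    using minimal_not_induced_3_colorable_degree[OF fin _ min _ T(2)]
      no_loop_if_subset_all_edges[OF assms(2)]
    by (intro three_card_le_twice_card_edges[OF fin]) auto
  ultimately show ?thesis using T(1) that by blast
qed

definition small_sets_induced_3_colorable :: "nat \<Rightarrow> real \<Rightarrow> nat set set \<Rightarrow> bool" where
  "small_sets_induced_3_colorable n s E \<longleftrightarrow>
     (\<forall>S. S \<subseteq> {..<n} \<and> real (card S) \<le> s \<longrightarrow> induced_3_colorable E S)"

definition has_dense_subset :: "nat \<Rightarrow> nat \<Rightarrow> nat set set \<Rightarrow> bool" where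
  "has_dense_subset n t E \<longleftrightarrow>
     (\<exists>T. T \<subseteq> {..<n} \<and> card T = t \<and> 3 * t \<le> 2 * card (E \<inter> vertex_pairs T))"

lemma not_small_sets_induced_3_colorable_imp_has_dense_subset:
  assumes E: "E \<subseteq> all_edges n" and "\<not> small_sets_induced_3_colorable n s E"
  obtains t where "1 \<le> t" "t \<le> n" "real t \<le> s" "has_dense_subset n t E"
proof -
  obtain S where S: "S \<subseteq> {..<n}" "real (card S) \<le> s" "\<not> induced_3_colorable E S"
    using assms(2) unfolding small_sets_induced_3_colorable_def by blast
  have fin: "finite S" using S(1) finite_subset by blast
  obtain T where T: "T \<subseteq> S" "T \<noteq> {}" "3 * card T \<le> 2 * card (E \<inter> vertex_pairs T)"
    using not_induced_3_colorable_imp_dense_subset[OF fin E S(3)] .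
  have "card T \<le> card S" "card S \<le> n" using card_mono[OF fin T(1)] card_mono[OF _ S(1)] by auto
  moreover have "0 < card T" using T(1,2) fin by (meson card_gt_0_iff finite_subset)
  moreover have "real (card T) \<le> s" using \<open>card T \<le> card S\<close> S(2) by linarith
  moreover have "has_dense_subset n (card T) E" unfolding has_dense_subset_def using T S(1) by auto
  ultimately show ?thesis by (intro that[of "card T"]) auto
qed

subsection \<open>Counting dense configurations\<close>

lemma fact_ge_power_div_exp: "(real k / exp 1) ^ k \<le> fact k"
proof -
  have "real k ^ k / fact k \<le> (\<Sum>n. real k ^ n /\<^sub>R fact n)"
    using sum_le_suminf[OF sums_summable[OF exp_converges[of "real k"]], of "{k}"]
    by (simp add: divide_inverse mult.commute)
  also have "\<dots> = exp 1 ^ k"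
    using sums_unique[OF exp_converges[of "real k"]] exp_of_nat_mult[of k "1::real"] by simp
  finally show ?thesis by (simp add: power_divide divide_le_eq mult.commute)
qed

lemma binomial_le_exp_mult_div_power: "real (n choose t) \<le> (exp 1 * real n / real t) ^ t"
proof (cases "t = 0")
  case False
  have "real (n choose t) * fact t \<le> real n ^ t"
    using binomial_fact_pow[of n t] by (metis of_nat_fact of_nat_le_iff of_nat_mult of_nat_power)
  then have "real (n choose t) \<le> real n ^ t / fact t" by (simp add: le_divide_eq)
  also have "\<dots> \<le> real n ^ t / (real t / exp 1) ^ t"
    using fact_ge_power_div_exp[of t] False by (intro divide_left_mono) auto
  also have "\<dots> = (exp 1 * real n / real t) ^ t" by (simp add: power_divide power_mult_distrib)
  finally show ?thesis .
qed simp

lemma gnp_prob_has_dense_subset_le_binomial: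
  fixes p :: real and t :: nat
  assumes p: "0 \<le> p" "p \<le> 1"
  defines "k \<equiv> (3 * t + 1) div 2"
  shows "gnp_prob n p (has_dense_subset n t) \<le> real (n choose t) * real (t\<^sup>2 choose k) * p ^ k"
proof -
  define Ts where "Ts = {T. T \<subseteq> {..<n} \<and> card T = t}"
  define Fs where "Fs T = {F. F \<subseteq> vertex_pairs T \<and> card F = k}" for T
  have fin_Ts: "finite Ts" unfolding Ts_def by (rule finite_subset[of _ "Pow {..<n}"]) auto
  have fin_T: "finite T" if "T \<in> Ts" for T using that finite_subset unfolding Ts_def by blast
  have edges_bound: "gnp_prob n p (\<lambda>E. \<exists>F\<in>Fs T. F \<subseteq> E) \<le> real (t\<^sup>2 choose k) * p ^ k"
    if T: "T \<in> Ts" for T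
  proof -
    have fin_Fs: "finite (Fs T)"
      using finite_vertex_pairs[OF fin_T[OF T]] unfolding Fs_def by auto
    have "gnp_prob n p (\<lambda>E. \<exists>F\<in>Fs T. F \<subseteq> E) \<le> (\<Sum>F\<in>Fs T. gnp_prob n p (\<lambda>E. F \<subseteq> E))"
      by (rule gnp_prob_union_bound[OF p fin_Fs]) blast
    also have "\<dots> = (\<Sum>F\<in>Fs T. p ^ k)"
      using vertex_pairs_subset_all_edges[of T n] T
      by (intro sum.cong) (auto simp: Fs_def Ts_def gnp_prob_superset)
    also have "\<dots> = real (card (vertex_pairs T) choose k) * p ^ k"
      using n_subsets[OF finite_vertex_pairs[OF fin_T[OF T]]] by (simp add: Fs_def)
    also have "\<dots> \<le> real (t\<^sup>2 choose k) * p ^ k"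
      using card_vertex_pairs_le[OF fin_T[OF T]] T p
      by (intro mult_right_mono) (auto simp: Ts_def intro: binomial_right_mono)
    finally show ?thesis .
  qed
  have "gnp_prob n p (has_dense_subset n t) \<le> (\<Sum>T\<in>Ts. gnp_prob n p (\<lambda>E. \<exists>F\<in>Fs T. F \<subseteq> E))"
  proof (rule gnp_prob_union_bound[OF p fin_Ts])
    fix E assume "has_dense_subset n t E"
    then obtain T where T: "T \<in> Ts" and "k \<le> card (E \<inter> vertex_pairs T)"
      unfolding has_dense_subset_def Ts_def k_def by auto
    then obtain F where "F \<subseteq> E \<inter> vertex_pairs T" "card F = k"
      by (meson obtain_subset_with_card_n)
    then show "\<exists>T\<in>Ts. \<exists>F\<in>Fs T. F \<subseteq> E" using T unfolding Fs_def by blast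
  qed
  also have "\<dots> \<le> (\<Sum>T\<in>Ts. real (t\<^sup>2 choose k) * p ^ k)" using edges_bound by (rule sum_mono)
  also have "\<dots> = real (n choose t) * real (t\<^sup>2 choose k) * p ^ k"
    using n_subsets[of "{..<n}" t] by (simp add: Ts_def)
  finally show ?thesis .
qed

text \<open>Squaring turns \<open>p\<^bsup>\<lceil>3t/2\<rceil>\<^esup>\<close> into a power of \<open>p\<^sup>3\<close>; the hypothesis
  \<open>e t p \<le> 1\<close> lets us round the exponent \<open>2\<lceil>3t/2\<rceil>\<close> down to \<open>3t\<close>.\<close>

lemma dense_subset_bound_squared_le:
  fixes p :: real and t :: nat
  assumes t: "1 \<le> t" and p: "0 \<le> p" and etp: "exp 1 * real t * p \<le> 1"
  defines "k \<equiv> (3 * t + 1) div 2"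
  shows "(real (n choose t) * real (t\<^sup>2 choose k) * p ^ k)\<^sup>2 \<le> (exp 5 * real n ^ 2 * real t * p ^ 3) ^ t"
proof -
  have k: "t \<le> k" "3 * t \<le> 2 * k" using t unfolding k_def by auto
  have "real (t\<^sup>2 choose k) \<le> (exp 1 * real (t\<^sup>2) / real k) ^ k"
    by (rule binomial_le_exp_mult_div_power)
  also have "\<dots> \<le> (exp 1 * real t) ^ k"
  proof (rule power_mono)
    have "real (t\<^sup>2) \<le> real t * real k"
      using mult_left_mono[OF of_nat_mono[OF k(1)], of "real t"] by (simp add: power2_eq_square)
    then have "real (t\<^sup>2) / real k \<le> real t" using k t by (simp add: divide_le_eq)
    then show "exp 1 * real (t\<^sup>2) / real k \<le> exp 1 * real t"
      by (metis mult_left_mono exp_ge_zero times_divide_eq_right)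
  qed simp
  finally have "real (n choose t) * real (t\<^sup>2 choose k) * p ^ k
      \<le> (exp 1 * real n / real t) ^ t * ((exp 1 * real t) ^ k * p ^ k)"
    using binomial_le_exp_mult_div_power[of n t] p by (simp add: mult.assoc mult_mono)
  then have "(real (n choose t) * real (t\<^sup>2 choose k) * p ^ k)\<^sup>2
      \<le> ((exp 1 * real n / real t) ^ t * (exp 1 * real t * p) ^ k)\<^sup>2"
    using p by (intro power_mono) (auto simp: power_mult_distrib)
  also have "\<dots> = (exp 1 * real n / real t) ^ (2 * t) * (exp 1 * real t * p) ^ (2 * k)"
    by (simp add: power_mult_distrib power_mult[symmetric] mult.commute)
  also have "\<dots> \<le> (exp 1 * real n / real t) ^ (2 * t) * (exp 1 * real t * p) ^ (3 * t)"
    using k etp p by (intro mult_left_mono power_decreasing) auto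
  also have "\<dots> = ((exp 1 * real n / real t)\<^sup>2 * (exp 1 * real t * p) ^ 3) ^ t"
    by (simp only: power_mult power_mult_distrib)
  also have "(exp 1 * real n / real t)\<^sup>2 * (exp 1 * real t * p) ^ 3 = exp 5 * real n ^ 2 * real t * p ^ 3"
  proof -
    have "exp (5::real) = exp 1 ^ 5" using exp_of_nat_mult[of 5 "1::real"] by simp
    then show ?thesis
      using t by (simp add: power2_eq_square power3_eq_cube field_simps numeral_eq_Suc)
  qed
  finally show ?thesis .
qed

lemma gnp_prob_has_dense_subset_le:
  fixes p y :: real
  assumes p: "0 \<le> p" "p \<le> 1" and t: "1 \<le> t" and etp: "exp 1 * real t * p \<le> 1"
    and y: "0 \<le> y" "exp 5 * real n ^ 2 * real t * p ^ 3 \<le> y\<^sup>2"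
  shows "gnp_prob n p (has_dense_subset n t) \<le> y ^ t"
proof -
  let ?k = "(3 * t + 1) div 2"
  have "(real (n choose t) * real (t\<^sup>2 choose ?k) * p ^ ?k)\<^sup>2 \<le> (exp 5 * real n ^ 2 * real t * p ^ 3) ^ t"
    by (rule dense_subset_bound_squared_le[OF t p(1) etp])
  also have "\<dots> \<le> (y\<^sup>2) ^ t" using y(2) p by (intro power_mono) auto
  also have "\<dots> = (y ^ t)\<^sup>2" by (metis power_mult mult.commute)
  finally have "real (n choose t) * real (t\<^sup>2 choose ?k) * p ^ ?k \<le> y ^ t"
    by (rule power2_le_imp_le) (use y(1) in simp)
  then show ?thesis using gnp_prob_has_dense_subset_le_binomial[OF p, of n t] by linarith
qed

lemma gnp_prob_not_small_sets_induced_3_colorable_le: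
  fixes p s y :: real
  assumes p: "0 \<le> p" "p \<le> 1" and esp: "exp 1 * s * p \<le> 1"
    and y: "0 \<le> y" "exp 5 * real n ^ 2 * s * p ^ 3 \<le> y\<^sup>2"
  shows "gnp_prob n p (\<lambda>E. \<not> small_sets_induced_3_colorable n s E) \<le> (\<Sum>t\<in>{1..n}. y ^ t)"
proof -
  define I where "I = {t\<in>{1..n}. real t \<le> s}"
  have "gnp_prob n p (\<lambda>E. \<not> small_sets_induced_3_colorable n s E)
      \<le> (\<Sum>t\<in>I. gnp_prob n p (has_dense_subset n t))"
    by (rule gnp_prob_union_bound[OF p])
      (auto simp: I_def elim!: not_small_sets_induced_3_colorable_imp_has_dense_subset)
  also have "\<dots> \<le> (\<Sum>t\<in>I. y ^ t)"
  proof (rule sum_mono)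
    fix t assume "t \<in> I"
    then have t: "1 \<le> t" "real t \<le> s" unfolding I_def by auto
    have "exp 1 * real t * p \<le> exp 1 * s * p" using t p by (simp add: mult_right_mono)
    moreover have "exp 5 * real n ^ 2 * real t * p ^ 3 \<le> exp 5 * real n ^ 2 * s * p ^ 3"
      using t p by (intro mult_right_mono mult_left_mono) auto
    ultimately show "gnp_prob n p (has_dense_subset n t) \<le> y ^ t"
      using esp y by (intro gnp_prob_has_dense_subset_le[OF p t(1) _ y(1)]) linarith+
  qed
  also have "\<dots> \<le> (\<Sum>t\<in>{1..n}. y ^ t)" using y by (intro sum_mono2) (auto simp: I_def)
  finally show ?thesis .
qed

lemma sum_power_le_double:
  fixes y :: real assumes "0 \<le> y" "y \<le> 1/2"
  shows "(\<Sum>t\<in>{1..n}. y ^ t) \<le> 2 * y"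
proof -
  have "(\<Sum>i<n. y ^ i) = (1 - y ^ n) / (1 - y)" using assms by (simp add: sum_gp_strict)
  also have "\<dots> \<le> 1 / (1 - y)" using assms by (intro divide_right_mono) auto
  also have "\<dots> \<le> 2" using assms by (simp add: divide_le_eq)
  finally have "y * (\<Sum>i<n. y ^ i) \<le> y * 2" using assms(1) by (rule mult_left_mono)
  moreover have "(\<Sum>t\<in>{1..n}. y ^ t) = y * (\<Sum>i<n. y ^ i)"
    by (induction n) (simp_all add: algebra_simps)
  ultimately show ?thesis by simp
qed

lemma sqrt_mult_powr: "0 \<le> x \<Longrightarrow> sqrt x * x powr a = x powr (1/2 + a)"
  by (simp add: powr_half_sqrt[symmetric] powr_add)

lemma power2_mult_sqrt_mult_powr_cube:
  assumes "0 \<le> x" shows "x\<^sup>2 * sqrt x * (x powr a) ^ 3 = x powr (5/2 + 3 * a)"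
proof (cases "x = 0")
  case False
  then have "x\<^sup>2 * sqrt x * (x powr a) ^ 3 = x powr 2 * x powr (1/2) * x powr (3 * a)"
    using assms by (simp add: powr_half_sqrt powr_realpow powr_power mult.commute)
  also have "\<dots> = x powr (5/2 + 3 * a)" by (simp add: powr_add[symmetric])
  finally show ?thesis .
qed simp

lemma powr_neg_le_one: "0 \<le> a \<Longrightarrow> real n powr (-a) \<le> 1"
  by (cases "n = 0") (simp_all add: powr_minus ge_one_powr_ge_zero inverse_le_1_iff)

lemma gnp_prob_not_small_sets_induced_3_colorable_tendsto_0:
  fixes p s :: "nat \<Rightarrow> real"
  assumes p: "\<And>n. 0 \<le> p n" "\<And>n. p n \<le> 1" and s: "\<And>n. 0 \<le> s n"
    and sp: "(\<lambda>n. s n * p n) \<longlonglongrightarrow> 0" and n2sp3: "(\<lambda>n. real n ^ 2 * s n * p n ^ 3) \<longlonglongrightarrow> 0"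
  shows "(\<lambda>n. gnp_prob n (p n) (\<lambda>E. \<not> small_sets_induced_3_colorable n (s n) E)) \<longlonglongrightarrow> 0"
proof -
  define y where "y n = sqrt (exp 5 * (real n ^ 2 * s n * p n ^ 3))" for n
  have y0: "0 \<le> y n" for n using p s by (simp add: y_def)
  have y_sq: "exp 5 * real n ^ 2 * s n * p n ^ 3 = (y n)\<^sup>2" for n
    using p s by (simp add: y_def ac_simps)
  have "y \<longlonglongrightarrow> 0"
    unfolding y_def using tendsto_real_sqrt[OF tendsto_mult_right_zero[OF n2sp3]] by simp
  from order_tendstoD(2)[OF this, of "1/2"] have "eventually (\<lambda>n. y n \<le> 1/2) sequentially"
    by (rule eventually_mono) simp_all
  moreover have "eventually (\<lambda>n. exp 1 * s n * p n \<le> 1) sequentially"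
    using order_tendstoD(2)[OF tendsto_mult_right_zero[OF sp, of "exp 1"] zero_less_one]
    by (rule eventually_mono) (simp add: mult.assoc)
  ultimately have bound: "eventually (\<lambda>n. gnp_prob n (p n)
      (\<lambda>E. \<not> small_sets_induced_3_colorable n (s n) E) \<le> 2 * y n) sequentially"
  proof eventually_elim
    case (elim n)
    have "gnp_prob n (p n) (\<lambda>E. \<not> small_sets_induced_3_colorable n (s n) E) \<le> (\<Sum>t\<in>{1..n}. y n ^ t)"
      by (rule gnp_prob_not_small_sets_induced_3_colorable_le[OF p elim(2) y0]) (simp add: y_sq)
    also have "\<dots> \<le> 2 * y n" using y0 elim(1) by (rule sum_power_le_double)
    finally show ?case .
  qed
  have two_y: "(\<lambda>n. 2 * y n) \<longlonglongrightarrow> 0" using tendsto_mult_right_zero[OF \<open>y \<longlonglongrightarrow> 0\<close>] by simp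
  have "\<forall>n. 0 \<le> gnp_prob n (p n) (\<lambda>E. \<not> small_sets_induced_3_colorable n (s n) E)"
    using gnp_prob_nonneg[OF p] by blast
  from tendsto_sandwich[OF always_eventually[OF this] bound tendsto_const two_y] show ?thesis .
qed

theorem mainTheorem1:
  fixes \<alpha> c :: real
  assumes "\<alpha> > 5/6" and "c > 0"
  shows "(\<lambda>n. gnp_prob n (real n powr (-\<alpha>))
            (\<lambda>E. \<forall>S. S \<subseteq> {..<n} \<and> real (card S) \<le> c * sqrt (real n)
                   \<longrightarrow> induced_3_colorable E S)) \<longlonglongrightarrow> 1"
proof -
  let ?p = "\<lambda>n. real n powr (-\<alpha>)" and ?s = "\<lambda>n. c * sqrt (real n)"
  have "(\<lambda>n. c * real n powr (1/2 - \<alpha>)) \<longlonglongrightarrow> 0"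
    using assms by (auto intro!: tendsto_mult_right_zero tendsto_neg_powr filterlim_real_sequentially)
  then have sp: "(\<lambda>n. ?s n * ?p n) \<longlonglongrightarrow> 0" by (simp add: sqrt_mult_powr mult.assoc)
  have "(\<lambda>n. c * real n powr (5/2 - 3 * \<alpha>)) \<longlonglongrightarrow> 0"
    using assms by (auto intro!: tendsto_mult_right_zero tendsto_neg_powr filterlim_real_sequentially)
  then have n2sp3: "(\<lambda>n. real n ^ 2 * ?s n * ?p n ^ 3) \<longlonglongrightarrow> 0"
    using power2_mult_sqrt_mult_powr_cube[of "real _" "-\<alpha>"] by (simp add: ac_simps)
  have "(\<lambda>n. gnp_prob n (?p n) (\<lambda>E. \<not> small_sets_induced_3_colorable n (?s n) E)) \<longlonglongrightarrow> 0"
    using assms powr_neg_le_one[of \<alpha>]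
    by (intro gnp_prob_not_small_sets_induced_3_colorable_tendsto_0[OF _ _ _ sp n2sp3]) auto
  then have "(\<lambda>n. 1 - gnp_prob n (?p n) (\<lambda>E. \<not> small_sets_induced_3_colorable n (?s n) E)) \<longlonglongrightarrow> 1 - 0"
    by (intro tendsto_diff tendsto_const)
  then show ?thesis unfolding gnp_prob_Not by (simp add: small_sets_induced_3_colorable_def)
qed

end
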